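(* Let $n$ be a power of two, $\Delta=50+1000\log n$ and $m=1000\Delta^2$. There exists a function $h:\{0,1\}^{\le 3\Delta}\to\{0,1,\dots,m-1\}$ such that for all $z\in\{0,1\}^{\le 3\Delta}$ and all $z'\neq z$ obtained from $z$ by at most two adjacent transpositions, or by at most two substitutions, or by at most one deletion and at most one insertion, we have $h(z)\neq h(z')$.
   Context: Logarithms are base $2$. $\{0,1\}^{\le k}$ is the set of binary strings of length at most $k$. An adjacent transposition swaps two consecutive coordinates; a substitution flips one bit; a deletion removes one coordinate; an insertion adds one bit at some position. *)

theory Defs
  imports Main
begin

definition adj_transp :: "bool list \<Rightarrow> bool list \<Rightarrow> bool" where
  "adj_transp xs ys \<longleftrightarrow>
     (\<exists>i. Suc i < length xs \<and> ys = xs[i := xs ! Suc i, Suc i := xs ! i])"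

definition subst1 :: "bool list \<Rightarrow> bool list \<Rightarrow> bool" where
  "subst1 xs ys \<longleftrightarrow> (\<exists>i < length xs. ys = xs[i := \<not> xs ! i])"

definition del1 :: "bool list \<Rightarrow> bool list \<Rightarrow> bool" where
  "del1 xs ys \<longleftrightarrow> (\<exists>i < length xs. ys = take i xs @ drop (Suc i) xs)"

definition ins1 :: "bool list \<Rightarrow> bool list \<Rightarrow> bool" where
  "ins1 xs ys \<longleftrightarrow> (\<exists>i \<le> length xs. \<exists>b. ys = take i xs @ b # drop i xs)"

definition close_edit :: "bool list \<Rightarrow> bool list \<Rightarrow> bool" where
  "close_edit z z' \<longleftrightarrow>
     (\<exists>k \<le> 2. (adj_transp ^^ k) z z') \<or>
     (\<exists>k \<le> 2. (subst1 ^^ k) z z') \<or>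
     (\<exists>w a b. a \<le> 1 \<and> b \<le> 1 \<and> (del1 ^^ a) z w \<and> (ins1 ^^ b) w z')"

end

theory Submission
  imports Defs
begin

text \<open>Closeness is symmetric: transpositions and substitutions are involutions and an insertion
  undoes a deletion. A string of length l has at most (l+1)^2 strings within two transpositions,
  as many within two substitutions, and at most 3(l+1)^2 within a deletion followed by an
  insertion. So in the conflict graph on the strings of length at most 3\<Delta> every vertex has
  degree at most 5(3\<Delta>+1)^2 < 1000\<Delta>^2, and a greedy colouring of it is the required h.\<close>

lemma card_UN_le_mult:
  assumes "finite I" and "\<And>i. i \<in> I \<Longrightarrow> card (A i) \<le> c"
  shows "card (\<Union>i\<in>I. A i) \<le> card I * c"
  using card_UN_le[OF assms(1), of A] sum_bounded_above[of I "\<lambda>i. card (A i)" c] assms(2)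
  by simp

lemma greedy_colouring:
  fixes R :: "'a \<Rightarrow> 'a \<Rightarrow> bool"
  assumes "finite S"
    and "\<And>x. x \<in> S \<Longrightarrow> card {y \<in> S. y \<noteq> x \<and> (R x y \<or> R y x)} \<le> d"
  shows "\<exists>h :: 'a \<Rightarrow> nat. (\<forall>x\<in>S. h x \<le> d) \<and> (\<forall>x\<in>S. \<forall>y\<in>S. x \<noteq> y \<longrightarrow> R x y \<longrightarrow> h x \<noteq> h y)"
  using assms
proof (induction S rule: finite_induct)
  case empty
  then show ?case by simp
next
  case (insert x S)
  have "card {y \<in> S. y \<noteq> u \<and> (R u y \<or> R y u)} \<le> d" if "u \<in> S" for u
  proof -
    have "card {y \<in> S. y \<noteq> u \<and> (R u y \<or> R y u)}
        \<le> card {y \<in> insert x S. y \<noteq> u \<and> (R u y \<or> R y u)}"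
      using insert.hyps(1) by (intro card_mono) auto
    also have "\<dots> \<le> d"
      using insert.prems that by simp
    finally show ?thesis .
  qed
  then obtain h where h: "\<forall>u\<in>S. h u \<le> d" "\<forall>u\<in>S. \<forall>y\<in>S. u \<noteq> y \<longrightarrow> R u y \<longrightarrow> h u \<noteq> h y"
    using insert.IH by blast
  let ?N = "{y \<in> S. R x y \<or> R y x}"
  have "?N = {y \<in> insert x S. y \<noteq> x \<and> (R x y \<or> R y x)}"
    using insert.hyps(2) by auto
  then have "card ?N \<le> d"
    using insert.prems by simp
  then have "card (h ` ?N) \<le> d"
    using card_image_le[of ?N h] insert.hyps(1) by simp
  then have "\<not> {..d} \<subseteq> h ` ?N"
    using insert.hyps(1) card_mono[of "h ` ?N" "{..d}"] by auto
  then obtain c where "c \<le> d" "c \<notin> h ` ?N"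
    by auto
  then show ?case
    using h insert.hyps(2) by (intro exI[of _ "h(x := c)"]) auto
qed

lemma relpowp_conversep: "R\<inverse>\<inverse> ^^ k = (R ^^ k)\<inverse>\<inverse>"
  for R :: "'a \<Rightarrow> 'a \<Rightarrow> bool"
proof (induction k)
  case (Suc k)
  have "R\<inverse>\<inverse> ^^ Suc k = (R ^^ k)\<inverse>\<inverse> OO R\<inverse>\<inverse>"
    by (simp only: relpowp_Suc_right Suc.IH)
  also have "\<dots> = (R ^^ Suc k)\<inverse>\<inverse>"
    by (simp only: relpowp_Suc_left converse_relcompp)
  finally show ?case .
qed simp

lemma symp_relpowp: "symp R \<Longrightarrow> symp (R ^^ k)"
  for R :: "'a \<Rightarrow> 'a \<Rightarrow> bool"
  by (metis relpowp_conversep symp_conv_conversep_eq)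

lemma relpowp_le_Suc_iff:
  "(\<exists>k \<le> Suc j. (R ^^ k) x y) \<longleftrightarrow> (\<exists>w. (\<exists>k \<le> j. (R ^^ k) x w) \<and> (y = w \<or> R w y))"
proof
  assume "\<exists>k \<le> Suc j. (R ^^ k) x y"
  then obtain k where k: "k \<le> Suc j" "(R ^^ k) x y" by blast
  show "\<exists>w. (\<exists>k \<le> j. (R ^^ k) x w) \<and> (y = w \<or> R w y)"
  proof (cases k)
    case 0
    then show ?thesis
      using k by (auto intro!: exI[of _ x] exI[of _ 0])
  next
    case (Suc i)
    then show ?thesis
      using k by (auto elim: relpowp_Suc_E)
  qed
next
  assume "\<exists>w. (\<exists>k \<le> j. (R ^^ k) x w) \<and> (y = w \<or> R w y)"
  then obtain w k where k: "k \<le> j" "(R ^^ k) x w" and "y = w \<or> R w y" by blast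
  then show "\<exists>k \<le> Suc j. (R ^^ k) x y"
  proof (elim disjE)
    assume "y = w"
    then show ?thesis
      using k le_SucI by blast
  next
    assume "R w y"
    then have "(R ^^ Suc k) x y"
      using k(2) by (rule relpowp_Suc_I[rotated])
    then show ?thesis
      using k(1) by (intro exI[of _ "Suc k"]) simp
  qed
qed

lemma relpowp_le_1_iff: "(\<exists>k \<le> 1. (R ^^ k) x y) \<longleftrightarrow> y = x \<or> R x y"
  using relpowp_le_Suc_iff[of 0 R x y] by simp

lemma relpowp_closed:
  assumes "(R ^^ k) x y" and "x \<in> A" and "\<And>u v. u \<in> A \<Longrightarrow> R u v \<Longrightarrow> v \<in> A"
  shows "y \<in> A"
  using assms(1) by (induction k arbitrary: y) (auto elim: relpowp_Suc_E intro: assms(2,3))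

lemma card_reachable_within_le:
  fixes R :: "'a \<Rightarrow> 'a \<Rightarrow> bool"
  assumes "x \<in> A" and closed: "\<And>u v. u \<in> A \<Longrightarrow> R u v \<Longrightarrow> v \<in> A"
    and finite: "\<And>u. u \<in> A \<Longrightarrow> finite {v. R u v}"
    and card: "\<And>u. u \<in> A \<Longrightarrow> card {v. R u v} \<le> c"
  shows "finite {y. \<exists>k \<le> j. (R ^^ k) x y} \<and> card {y. \<exists>k \<le> j. (R ^^ k) x y} \<le> (c + 1) ^ j"
proof (induction j)
  case 0
  have "{y. \<exists>k \<le> 0. (R ^^ k) x y} = {x}"
    by simp
  then show ?case
    by simp
next
  case (Suc j)
  let ?W = "{w. \<exists>k \<le> j. (R ^^ k) x w}"
  have steps: "{y. \<exists>k \<le> Suc j. (R ^^ k) x y} = (\<Union>w\<in>?W. insert w {v. R w v})"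
    unfolding relpowp_le_Suc_iff by auto
  have W: "finite ?W" "card ?W \<le> (c + 1) ^ j"
    using Suc.IH by blast+
  have W_in_A: "w \<in> A" if w: "w \<in> ?W" for w
  proof -
    obtain k where "(R ^^ k) x w"
      using w by blast
    then show "w \<in> A"
      using \<open>x \<in> A\<close> closed by (rule relpowp_closed)
  qed
  then have fin: "finite (insert w {v. R w v})" if "w \<in> ?W" for w
    using that finite by simp
  have card_step: "card (insert w {v. R w v}) \<le> c + 1" if "w \<in> ?W" for w
    using card[OF W_in_A[OF that]] finite[OF W_in_A[OF that]] by (simp add: card_insert_if)
  have "card {y. \<exists>k \<le> Suc j. (R ^^ k) x y} \<le> card ?W * (c + 1)"
    unfolding steps by (rule card_UN_le_mult[OF W(1) card_step])
  also have "\<dots> \<le> (c + 1) ^ Suc j"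
    unfolding power_Suc2 using W(2) by (rule mult_le_mono1)
  finally have "card {y. \<exists>k \<le> Suc j. (R ^^ k) x y} \<le> (c + 1) ^ Suc j" .
  moreover have "finite {y. \<exists>k \<le> Suc j. (R ^^ k) x y}"
    unfolding steps using W(1) fin by (rule finite_UN_I)
  ultimately show ?case
    by simp
qed

lemma symp_adj_transp: "symp adj_transp"
proof (rule sympI)
  fix xs ys assume "adj_transp xs ys"
  then obtain i where i: "Suc i < length xs" and ys: "ys = xs[i := xs ! Suc i, Suc i := xs ! i]"
    unfolding adj_transp_def by blast
  have "xs = ys[i := ys ! Suc i, Suc i := ys ! i]"
    using i ys by (auto simp: nth_list_update list_eq_iff_nth_eq)
  then show "adj_transp ys xs"
    using i ys unfolding adj_transp_def by auto
qed

lemma symp_subst1: "symp subst1"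
proof (rule sympI)
  fix xs ys assume "subst1 xs ys"
  then obtain i where i: "i < length xs" and ys: "ys = xs[i := \<not> xs ! i]"
    unfolding subst1_def by blast
  have "xs = ys[i := \<not> ys ! i]"
    using i ys by (auto simp: nth_list_update list_eq_iff_nth_eq)
  then show "subst1 ys xs"
    using i ys unfolding subst1_def by auto
qed

lemma ins1_eq_conversep_del1: "ins1 = del1\<inverse>\<inverse>"
proof (intro ext iffI)
  fix xs ys assume "ins1 xs ys"
  then obtain i b where i: "i \<le> length xs" and ys: "ys = take i xs @ b # drop i xs"
    unfolding ins1_def by blast
  show "del1\<inverse>\<inverse> xs ys"
    using i ys unfolding del1_def by (intro conversepI exI[of _ i]) (auto simp: min_def)
next
  fix xs ys assume "del1\<inverse>\<inverse> xs ys"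
  then obtain i where i: "i < length ys" and xs: "xs = take i ys @ drop (Suc i) ys"
    unfolding del1_def by blast
  have "ys = take i xs @ ys ! i # drop i xs"
    using i xs by (simp add: id_take_nth_drop)
  then show "ins1 xs ys"
    using i xs unfolding ins1_def by (intro exI[of _ i] exI[of _ "ys ! i"]) auto
qed

lemma close_edit_sym:
  assumes "close_edit z z'"
  shows "close_edit z' z"
proof -
  have ins1_pow_iff: "(ins1 ^^ b) w v \<longleftrightarrow> (del1 ^^ b) v w" for b w v
    by (simp add: ins1_eq_conversep_del1 relpowp_conversep)
  from assms consider
      (adj) k where "k \<le> 2" "(adj_transp ^^ k) z z'"
    | (subst) k where "k \<le> 2" "(subst1 ^^ k) z z'"
    | (del_ins) w a b where "a \<le> 1" "b \<le> 1" "(del1 ^^ a) z w" "(ins1 ^^ b) w z'"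
    unfolding close_edit_def by blast
  then show ?thesis
  proof cases
    case adj
    then have "(adj_transp ^^ k) z' z"
      using symp_relpowp[OF symp_adj_transp] by (blast dest: sympD)
    then show ?thesis
      unfolding close_edit_def using adj(1) by blast
  next
    case subst
    then have "(subst1 ^^ k) z' z"
      using symp_relpowp[OF symp_subst1] by (blast dest: sympD)
    then show ?thesis
      unfolding close_edit_def using subst(1) by blast
  next
    case del_ins
    then have "(del1 ^^ b) z' w" "(ins1 ^^ a) w z"
      using ins1_pow_iff by auto
    then show ?thesis
      unfolding close_edit_def using del_ins(1,2) by blast
  qed
qed

lemma adj_transp_length: "adj_transp xs ys \<Longrightarrow> length ys = length xs"
  unfolding adj_transp_def by auto

lemma subst1_length: "subst1 xs ys \<Longrightarrow> length ys = length xs"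
  unfolding subst1_def by auto

lemma adj_transp_neighbours:
  "finite {ys. adj_transp xs ys}" "card {ys. adj_transp xs ys} \<le> length xs"
proof -
  have sub: "{ys. adj_transp xs ys} \<subseteq> (\<lambda>i. xs[i := xs ! Suc i, Suc i := xs ! i]) ` {..<length xs}"
    unfolding adj_transp_def by auto
  then show "finite {ys. adj_transp xs ys}" "card {ys. adj_transp xs ys} \<le> length xs"
    using finite_surj[OF _ sub] surj_card_le[OF _ sub] by simp_all
qed

lemma subst1_neighbours:
  "finite {ys. subst1 xs ys}" "card {ys. subst1 xs ys} \<le> length xs"
proof -
  have sub: "{ys. subst1 xs ys} \<subseteq> (\<lambda>i. xs[i := \<not> xs ! i]) ` {..<length xs}"
    unfolding subst1_def by auto
  then show "finite {ys. subst1 xs ys}" "card {ys. subst1 xs ys} \<le> length xs"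
    using finite_surj[OF _ sub] surj_card_le[OF _ sub] by simp_all
qed

lemma del1_neighbours:
  "finite {ys. del1 xs ys}" "card {ys. del1 xs ys} \<le> length xs"
proof -
  have sub: "{ys. del1 xs ys} \<subseteq> (\<lambda>i. take i xs @ drop (Suc i) xs) ` {..<length xs}"
    unfolding del1_def by auto
  then show "finite {ys. del1 xs ys}" "card {ys. del1 xs ys} \<le> length xs"
    using finite_surj[OF _ sub] surj_card_le[OF _ sub] by simp_all
qed

lemma ins1_neighbours:
  "finite {ys. ins1 xs ys}" "card {ys. ins1 xs ys} \<le> 2 * (length xs + 1)"
proof -
  let ?I = "{..length xs} \<times> (UNIV :: bool set)"
  have sub: "{ys. ins1 xs ys} \<subseteq> (\<lambda>(i, b). take i xs @ b # drop i xs) ` ?I"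
    unfolding ins1_def by auto
  have "card ?I = 2 * (length xs + 1)"
    by (simp add: card_cartesian_product)
  then show "finite {ys. ins1 xs ys}" "card {ys. ins1 xs ys} \<le> 2 * (length xs + 1)"
    using finite_surj[OF _ sub] surj_card_le[OF _ sub] by simp_all
qed

lemma del_ins_neighbours:
  fixes z :: "bool list"
  defines "C \<equiv> {z'. \<exists>w a b. a \<le> 1 \<and> b \<le> 1 \<and> (del1 ^^ a) z w \<and> (ins1 ^^ b) w z'}"
  shows "finite C" "card C \<le> 3 * (length z + 1)\<^sup>2"
proof -
  let ?W = "insert z {w. del1 z w}"
  have "z' \<in> C \<longleftrightarrow> (\<exists>w. (\<exists>a \<le> 1. (del1 ^^ a) z w) \<and> (\<exists>b \<le> 1. (ins1 ^^ b) w z'))" for z'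
    unfolding C_def by blast
  then have C_eq: "C = (\<Union>w\<in>?W. insert w {y. ins1 w y})"
    unfolding relpowp_le_1_iff by auto
  have card_ins: "card (insert w {y. ins1 w y}) \<le> 3 * (length z + 1)" if w: "w \<in> ?W" for w
  proof -
    have "length w \<le> length z"
      using w unfolding del1_def by auto
    then show ?thesis
      using ins1_neighbours[of w] by (simp add: card_insert_if)
  qed
  have W: "finite ?W" "card ?W \<le> length z + 1"
    using del1_neighbours[of z] by (simp_all add: card_insert_if)
  have "card C \<le> card ?W * (3 * (length z + 1))"
    unfolding C_eq by (rule card_UN_le_mult[OF W(1) card_ins])
  also have "\<dots> \<le> (length z + 1) * (3 * (length z + 1))"
    by (rule mult_le_mono1[OF W(2)])
  also have "\<dots> = 3 * (length z + 1)\<^sup>2"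
    by (simp add: power2_eq_square algebra_simps)
  finally show "card C \<le> 3 * (length z + 1)\<^sup>2" .
  show "finite C"
    unfolding C_eq using W(1) ins1_neighbours(1) by simp
qed

lemma close_edit_neighbours:
  "finite {y. close_edit z y}" "card {y. close_edit z y} \<le> 5 * (length z + 1)\<^sup>2"
proof -
  let ?A = "{y. \<exists>k \<le> 2. (adj_transp ^^ k) z y}"
  let ?B = "{y. \<exists>k \<le> 2. (subst1 ^^ k) z y}"
  let ?C = "{z'. \<exists>w a b. a \<le> 1 \<and> b \<le> 1 \<and> (del1 ^^ a) z w \<and> (ins1 ^^ b) w z'}"
  have A: "finite ?A \<and> card ?A \<le> (length z + 1)\<^sup>2"
    by (rule card_reachable_within_le[where A = "{u. length u = length z}"])
      (auto simp: adj_transp_neighbours(1) adj_transp_length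
        intro: order_trans[OF adj_transp_neighbours(2)])
  have B: "finite ?B \<and> card ?B \<le> (length z + 1)\<^sup>2"
    by (rule card_reachable_within_le[where A = "{u. length u = length z}"])
      (auto simp: subst1_neighbours(1) subst1_length
        intro: order_trans[OF subst1_neighbours(2)])
  have split: "{y. close_edit z y} = ?A \<union> (?B \<union> ?C)"
    unfolding close_edit_def by (simp only: Collect_disj_eq)
  have "card {y. close_edit z y} \<le> card ?A + (card ?B + card ?C)"
    unfolding split by (meson add_le_mono card_Un_le le_trans order_refl)
  then show "card {y. close_edit z y} \<le> 5 * (length z + 1)\<^sup>2"
    using A B del_ins_neighbours(2)[of z] by simp
  show "finite {y. close_edit z y}"
    unfolding split using A B del_ins_neighbours(1)[of z] by simp
qed

lemma close_edit_conflict_degree: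
  assumes "length z \<le> L"
  shows "card {y \<in> {u. length u \<le> L}. y \<noteq> z \<and> (close_edit z y \<or> close_edit y z)}
    \<le> 5 * (L + 1)\<^sup>2"
proof -
  have "{y \<in> {u. length u \<le> L}. y \<noteq> z \<and> (close_edit z y \<or> close_edit y z)}
      \<subseteq> {y. close_edit z y}"
    using close_edit_sym by blast
  then have "card {y \<in> {u. length u \<le> L}. y \<noteq> z \<and> (close_edit z y \<or> close_edit y z)}
      \<le> card {y. close_edit z y}"
    by (rule card_mono[OF close_edit_neighbours(1)])
  also have "\<dots> \<le> 5 * (length z + 1)\<^sup>2"
    by (rule close_edit_neighbours(2))
  also have "\<dots> \<le> 5 * (L + 1)\<^sup>2"
    using assms by (simp add: power_mono)
  finally show ?thesis .
qed

theorem lemma7: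
  fixes n k :: nat
  assumes "n = 2 ^ k"
  shows "let \<Delta> = 50 + 1000 * k; m = 1000 * \<Delta>\<^sup>2 in
    \<exists>h :: bool list \<Rightarrow> nat.
      (\<forall>z. length z \<le> 3 * \<Delta> \<longrightarrow> h z < m) \<and>
      (\<forall>z z'. length z \<le> 3 * \<Delta> \<longrightarrow> length z' \<le> 3 * \<Delta> \<longrightarrow> z' \<noteq> z \<longrightarrow>
         close_edit z z' \<longrightarrow> h z \<noteq> h z')"
proof -
  \<comment> \<open>The hypothesis only says that k is log n.\<close>
  define \<Delta> :: nat where "\<Delta> = 50 + 1000 * k"
  let ?S = "{z :: bool list. length z \<le> 3 * \<Delta>}"
  have fin: "finite ?S"
    using finite_lists_length_le[OF finite_UNIV, of "3 * \<Delta>"] by simp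
  have deg: "card {y \<in> ?S. y \<noteq> z \<and> (close_edit z y \<or> close_edit y z)}
      \<le> 5 * (3 * \<Delta> + 1)\<^sup>2" if "z \<in> ?S" for z
    by (rule close_edit_conflict_degree) (use that in simp)
  obtain h where
    h: "\<forall>z\<in>?S. h z \<le> 5 * (3 * \<Delta> + 1)\<^sup>2"
       "\<forall>z\<in>?S. \<forall>z'\<in>?S. z \<noteq> z' \<longrightarrow> close_edit z z' \<longrightarrow> h z \<noteq> h z'"
    using greedy_colouring[OF fin deg] by blast
  have "50 \<le> \<Delta>" and "50 * \<Delta> \<le> \<Delta> * \<Delta>"
    and "5 * (3 * \<Delta> + 1)\<^sup>2 = 45 * (\<Delta> * \<Delta>) + 30 * \<Delta> + 5"
    by (simp_all add: \<Delta>_def power2_eq_square algebra_simps)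
  then have "5 * (3 * \<Delta> + 1)\<^sup>2 < 1000 * \<Delta>\<^sup>2"
    unfolding power2_eq_square by linarith
  then have "\<forall>z. length z \<le> 3 * \<Delta> \<longrightarrow> h z < 1000 * \<Delta>\<^sup>2"
    using h(1) by fastforce
  moreover have "\<forall>z z'. length z \<le> 3 * \<Delta> \<longrightarrow> length z' \<le> 3 * \<Delta> \<longrightarrow> z' \<noteq> z \<longrightarrow>
      close_edit z z' \<longrightarrow> h z \<noteq> h z'"
    using h(2) by simp
  ultimately show ?thesis
    unfolding Let_def \<Delta>_def[symmetric] by blast
qed

end
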